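(* Let $L=E[C_1,\dots,C_n]$ be a congruence normal lattice. Then $L$ is left modular if and only if, for every $i\in[n]$, the heart $H(C_i)$ contains an element lying on a maximal left modular chain of $E[C_1,\dots,C_{i-1}]$.
   Context: All lattices are finite. A subset $C$ of a poset is convex if $x,y\in C$ implies $[x,y]\subseteq C$. For a convex subset $C$ of a lattice $L$, let $I_L(C)=\{y\in L\mid \exists x\in C,\ y\le x\}$. The doubling $L[C]$ is the subposet of $L\times\{0<1\}$ (product order) on the set $\big(I_L(C)\times\{0\}\big)\sqcup\big(((L\setminus I_L(C))\cup C)\times\{1\}\big)$; it is a lattice. $E[\,]$ is the one-element lattice and $E[C_1,\dots,C_{i+1}]:=E[C_1,\dots,C_i][C_{i+1}]$, where each $C_{i+1}$ is a nonempty convex subset of $E[C_1,\dots,C_i]$. The heart $H(C)$ of a convex subset $C$ is the set of elements of $C$ that are below all maximal elements of $C$ and above all minimal elements of $C$. An element $a$ of a lattice is left modular if for all $b<c$ one has $(b\vee a)\wedge c=b\vee(a\wedge c)$. A maximal left modular chain is a maximal chain all of whose elements are left modular; a lattice is left modular if it has a maximal left modular chain. *)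

theory Defs
  imports Main
begin

text \<open>Every lattice E[C_1,...,C_k] is realised concretely as a set of
bool lists of length k: the doubling L[C] appends one bit (False = 0, True = 1)
to the elements of L. Since E[] has one element and L[C] carries the product
order of L x {0<1}, the order on E[C_1,...,C_k] is exactly the pointwise order
on bool lists (False < True).\<close>

definition leq :: "bool list \<Rightarrow> bool list \<Rightarrow> bool" where
  "leq xs ys \<longleftrightarrow> list_all2 (\<le>) xs ys"

definition lt :: "bool list \<Rightarrow> bool list \<Rightarrow> bool" where
  "lt xs ys \<longleftrightarrow> leq xs ys \<and> xs \<noteq> ys"

definition convex_in :: "bool list set \<Rightarrow> bool list set \<Rightarrow> bool" where
  "convex_in A C \<longleftrightarrow> C \<subseteq> A \<and>
     (\<forall>x\<in>C. \<forall>y\<in>C. \<forall>z\<in>A. leq x z \<and> leq z y \<longrightarrow> z \<in> C)"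

definition downset :: "bool list set \<Rightarrow> bool list set \<Rightarrow> bool list set" where
  "downset L C = {y \<in> L. \<exists>x\<in>C. leq y x}"

definition doubling :: "bool list set \<Rightarrow> bool list set \<Rightarrow> bool list set" where
  "doubling L C = {x @ [False] | x. x \<in> downset L C}
                \<union> {x @ [True] | x. x \<in> (L - downset L C) \<union> C}"

definition E :: "bool list set list \<Rightarrow> bool list set" where
  "E Cs = foldl doubling {[]} Cs"

definition doubling_seq :: "bool list set list \<Rightarrow> bool" where
  "doubling_seq Cs \<longleftrightarrow> (\<forall>i<length Cs. Cs ! i \<noteq> {} \<and> convex_in (E (take i Cs)) (Cs ! i))"

definition is_lub :: "bool list set \<Rightarrow> bool list \<Rightarrow> bool list \<Rightarrow> bool list \<Rightarrow> bool" where
  "is_lub A x y z \<longleftrightarrow> z \<in> A \<and> leq x z \<and> leq y z \<and>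
     (\<forall>u\<in>A. leq x u \<and> leq y u \<longrightarrow> leq z u)"

definition is_glb :: "bool list set \<Rightarrow> bool list \<Rightarrow> bool list \<Rightarrow> bool list \<Rightarrow> bool" where
  "is_glb A x y z \<longleftrightarrow> z \<in> A \<and> leq z x \<and> leq z y \<and>
     (\<forall>u\<in>A. leq u x \<and> leq u y \<longrightarrow> leq u z)"

definition join :: "bool list set \<Rightarrow> bool list \<Rightarrow> bool list \<Rightarrow> bool list" where
  "join A x y = (THE z. is_lub A x y z)"

definition meet :: "bool list set \<Rightarrow> bool list \<Rightarrow> bool list \<Rightarrow> bool list" where
  "meet A x y = (THE z. is_glb A x y z)"

definition left_modular_elem :: "bool list set \<Rightarrow> bool list \<Rightarrow> bool" where
  "left_modular_elem A a \<longleftrightarrow> a \<in> A \<and>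
     (\<forall>b\<in>A. \<forall>c\<in>A. lt b c \<longrightarrow>
        meet A (join A b a) c = join A b (meet A a c))"

definition is_chain :: "bool list set \<Rightarrow> bool list set \<Rightarrow> bool" where
  "is_chain A M \<longleftrightarrow> M \<subseteq> A \<and> (\<forall>x\<in>M. \<forall>y\<in>M. leq x y \<or> leq y x)"

definition maximal_chain :: "bool list set \<Rightarrow> bool list set \<Rightarrow> bool" where
  "maximal_chain A M \<longleftrightarrow> is_chain A M \<and> (\<forall>M'. is_chain A M' \<and> M \<subseteq> M' \<longrightarrow> M' = M)"

definition maximal_left_modular_chain :: "bool list set \<Rightarrow> bool list set \<Rightarrow> bool" where
  "maximal_left_modular_chain A M \<longleftrightarrow> maximal_chain A M \<and> (\<forall>a\<in>M. left_modular_elem A a)"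

definition left_modular_lattice :: "bool list set \<Rightarrow> bool" where
  "left_modular_lattice A \<longleftrightarrow> (\<exists>M. maximal_left_modular_chain A M)"

definition heart :: "bool list set \<Rightarrow> bool list set" where
  "heart C = {x \<in> C. (\<forall>m\<in>C. (\<forall>u\<in>C. leq m u \<longrightarrow> u = m) \<longrightarrow> leq x m) \<and>
                     (\<forall>m\<in>C. (\<forall>u\<in>C. leq u m \<longrightarrow> u = m) \<longrightarrow> leq m x)}"

end

theory Submission
  imports Defs
begin

(* Left modularity can be tracked one doubling at a time, so by induction on n it suffices to
   show: L[C] is left modular iff some maximal left modular chain of L passes through H(C).
   Write x0, x1 for the copies of x in L[C]. Then a0 is left modular in L[C] iff a is left modular
   in L and a \<or> w \<in> C for all w \<in> C, and a1 is left modular iff a is and a \<and> w \<in> C for all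
   w \<in> C; the heart H(C) consists exactly of the elements of C with both closure properties.
   Hence a maximal left modular chain M of L through x \<in> H(C) lifts to the maximal left modular
   chain {m0 | m \<in> M, m \<le> x} \<union> {m1 | m \<in> M, x \<le> m} of L[C]. Conversely a maximal left modular
   chain of L[C] projects onto one of L; if a0 is its largest element on level 0 and b1 its
   smallest on level 1, then for any w \<in> C the element b \<and> (a \<or> w) lies in C between a and b,
   so both of its copies belong to the chain, and their left modularity puts it into H(C). *)

section \<open>Order and chains on bit lists\<close>

lemma leq_refl [simp]: "leq x x"
  unfolding leq_def by (simp add: list_all2_refl)

lemma leq_trans: "leq x y \<Longrightarrow> leq y z \<Longrightarrow> leq x z"
  unfolding leq_def by (rule list_all2_trans[of "(\<le>)" "(\<le>)" "(\<le>)"]) auto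

lemma leq_antisym: "leq x y \<Longrightarrow> leq y x \<Longrightarrow> x = y"
  unfolding leq_def by (rule list_all2_antisym) auto

lemma leq_snoc [simp]: "leq (x @ [a]) (y @ [b]) \<longleftrightarrow> leq x y \<and> a \<le> b"
  unfolding leq_def
  by (cases "length x = length y") (auto simp: list_all2_append dest: list_all2_lengthD)

lemma leq_imp_count_True_le:
  "leq x y \<Longrightarrow> count_list x True \<le> count_list y True \<and>
     (x \<noteq> y \<longrightarrow> count_list x True < count_list y True)"
  unfolding leq_def
proof (induction rule: list_all2_induct)
  case (Cons a x b y)
  then show ?case by (cases a; cases b) auto
qed simp

lemma exists_maximal_above:
  assumes "finite S" "s \<in> S"
  obtains m where "m \<in> S" "leq s m" "\<forall>u\<in>S. leq m u \<longrightarrow> u = m"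
proof -
  let ?S = "{u \<in> S. leq s u}" and ?f = "\<lambda>u. count_list u True"
  have fin: "finite (?f ` ?S)" "?f ` ?S \<noteq> {}" using assms by auto
  obtain m where m: "m \<in> ?S" "?f m = Max (?f ` ?S)"
    using Max_in[OF fin] by (metis (no_types, lifting) imageE)
  have "u = m" if "u \<in> S" "leq m u" for u
  proof -
    have "u \<in> ?S" using m that leq_trans by blast
    then have "?f u \<le> ?f m" using m(2) fin(1) Max_ge by simp
    then show ?thesis using leq_imp_count_True_le[OF that(2)] by auto
  qed
  then show ?thesis using that m by blast
qed

lemma exists_minimal_below:
  assumes "finite S" "s \<in> S"
  obtains m where "m \<in> S" "leq m s" "\<forall>u\<in>S. leq u m \<longrightarrow> u = m"
proof -
  let ?S = "{u \<in> S. leq u s}" and ?f = "\<lambda>u. count_list u True"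
  have fin: "finite (?f ` ?S)" "?f ` ?S \<noteq> {}" using assms by auto
  obtain m where m: "m \<in> ?S" "?f m = Min (?f ` ?S)"
    using Min_in[OF fin] by (metis (no_types, lifting) imageE)
  have "u = m" if "u \<in> S" "leq u m" for u
  proof -
    have "u \<in> ?S" using m that leq_trans by blast
    then have "?f m \<le> ?f u" using m(2) fin(1) Min_le by simp
    then show ?thesis using leq_imp_count_True_le[OF that(2)] by auto
  qed
  then show ?thesis using that m by blast
qed

lemma finite_chain_has_greatest:
  assumes "finite A" "A \<noteq> {}" "\<forall>x\<in>A. \<forall>y\<in>A. leq x y \<or> leq y x"
  obtains a where "a \<in> A" "\<forall>u\<in>A. leq u a"
proof -
  obtain s where "s \<in> A" using assms(2) by blast
  then obtain a where "a \<in> A" "\<forall>u\<in>A. leq a u \<longrightarrow> u = a"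
    using exists_maximal_above[OF assms(1)] by blast
  then show ?thesis using that assms(3) by (metis leq_refl)
qed

lemma finite_chain_has_least:
  assumes "finite A" "A \<noteq> {}" "\<forall>x\<in>A. \<forall>y\<in>A. leq x y \<or> leq y x"
  obtains a where "a \<in> A" "\<forall>u\<in>A. leq a u"
proof -
  obtain s where "s \<in> A" using assms(2) by blast
  then obtain a where "a \<in> A" "\<forall>u\<in>A. leq u a \<longrightarrow> u = a"
    using exists_minimal_below[OF assms(1)] by blast
  then show ?thesis using that assms(3) by (metis leq_refl)
qed

lemma maximal_chainI:
  assumes "is_chain A M" "\<And>y. y \<in> A \<Longrightarrow> \<forall>m\<in>M. leq m y \<or> leq y m \<Longrightarrow> y \<in> M"
  shows "maximal_chain A M"
  using assms unfolding maximal_chain_def is_chain_def by blast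

lemma maximal_chain_memI:
  assumes "maximal_chain A M" "y \<in> A" "\<forall>m\<in>M. leq m y \<or> leq y m"
  shows "y \<in> M"
proof -
  have "is_chain A (insert y M)"
    using assms unfolding maximal_chain_def is_chain_def by auto
  then show ?thesis using assms(1) unfolding maximal_chain_def by blast
qed

lemma maximal_chain_nonempty:
  assumes "maximal_chain A M" "a \<in> A"
  shows "M \<noteq> {}"
proof
  assume "M = {}"
  moreover have "is_chain A {a}" using assms(2) unfolding is_chain_def by simp
  ultimately show False using assms(1) unfolding maximal_chain_def by blast
qed

definition split_chain :: "bool list set \<Rightarrow> bool list \<Rightarrow> bool list set" where
  "split_chain M x = {m @ [False] | m. m \<in> M \<and> leq m x} \<union> {m @ [True] | m. m \<in> M \<and> leq x m}"

lemma snoc_in_split_chain [simp]: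
  "m @ [b] \<in> split_chain M x \<longleftrightarrow> m \<in> M \<and> (if b then leq x m else leq m x)"
  unfolding split_chain_def by auto

lemma split_chain_elem_cases:
  assumes "p \<in> split_chain M x"
  obtains m b where "p = m @ [b]" "m \<in> M"
  using assms unfolding split_chain_def by auto

section \<open>Finite lattices\<close>

lemma join_eqI: "is_lub A x y z \<Longrightarrow> join A x y = z"
  unfolding join_def is_lub_def by (rule the_equality) (auto intro: leq_antisym)

lemma meet_eqI: "is_glb A x y z \<Longrightarrow> meet A x y = z"
  unfolding meet_def is_glb_def by (rule the_equality) (auto intro: leq_antisym)

lemma join_commute: "join A x y = join A y x"
  unfolding join_def is_lub_def by metis

locale finite_lattice =
  fixes L :: "bool list set"
  assumes nonempty: "L \<noteq> {}" and finite: "finite L"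
    and lub_exists: "x \<in> L \<Longrightarrow> y \<in> L \<Longrightarrow> \<exists>z. is_lub L x y z"
    and glb_exists: "x \<in> L \<Longrightarrow> y \<in> L \<Longrightarrow> \<exists>z. is_glb L x y z"
begin

lemma is_lub_join: "x \<in> L \<Longrightarrow> y \<in> L \<Longrightarrow> is_lub L x y (join L x y)"
  using lub_exists join_eqI by metis

lemma is_glb_meet: "x \<in> L \<Longrightarrow> y \<in> L \<Longrightarrow> is_glb L x y (meet L x y)"
  using glb_exists meet_eqI by metis

context
  fixes x y assumes x: "x \<in> L" and y: "y \<in> L"
begin

lemma join_closed: "join L x y \<in> L"
  and join_upper1: "leq x (join L x y)"
  and join_upper2: "leq y (join L x y)"
  and join_least: "u \<in> L \<Longrightarrow> leq x u \<Longrightarrow> leq y u \<Longrightarrow> leq (join L x y) u"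
  using is_lub_join[OF x y] unfolding is_lub_def by blast+

lemma meet_closed: "meet L x y \<in> L"
  and meet_lower1: "leq (meet L x y) x"
  and meet_lower2: "leq (meet L x y) y"
  and meet_greatest: "u \<in> L \<Longrightarrow> leq u x \<Longrightarrow> leq u y \<Longrightarrow> leq u (meet L x y)"
  using is_glb_meet[OF x y] unfolding is_glb_def by blast+

lemma join_absorb1: "leq y x \<Longrightarrow> join L x y = x"
  using x y by (intro join_eqI) (simp add: is_lub_def)

lemma meet_absorb2: "leq y x \<Longrightarrow> meet L x y = y"
  using x y by (intro meet_eqI) (simp add: is_glb_def)

end

lemma join_meet_le_meet_join:
  assumes a: "a \<in> L" and b: "b \<in> L" and c: "c \<in> L" and "leq b c"
  shows "leq (join L b (meet L a c)) (meet L (join L b a) c)"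
proof -
  have "leq (meet L a c) (join L b a)"
    using leq_trans[OF meet_lower1[OF a c] join_upper2[OF b a]] .
  then show ?thesis
    using assms join_upper1[OF b a] meet_lower2[OF a c]
    by (intro join_least meet_greatest join_closed meet_closed) auto
qed

lemma left_modular_elemD:
  assumes "left_modular_elem L a" "b \<in> L" "c \<in> L" "leq b c"
  shows "meet L (join L b a) c = join L b (meet L a c)"
proof (cases "b = c")
  case True
  have "a \<in> L" using assms(1) unfolding left_modular_elem_def by blast
  then show ?thesis
    using True assms(2) join_upper1 join_closed meet_lower2 meet_closed
    by (simp add: join_absorb1 meet_absorb2)
next
  case False
  then show ?thesis using assms unfolding left_modular_elem_def lt_def by blast
qed

end

section \<open>Doubling a convex set\<close>

locale convex_doubling = finite_lattice L for L +
  fixes C :: "bool list set"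
  assumes convex: "convex_in L C" and C_nonempty: "C \<noteq> {}"
begin

abbreviation "I \<equiv> downset L C"
abbreviation "D \<equiv> doubling L C"

lemma C_subset: "C \<subseteq> L"
  using convex unfolding convex_in_def by blast

lemma C_subset_downset: "x \<in> C \<Longrightarrow> x \<in> I"
  unfolding downset_def using C_subset leq_refl by blast

lemma downset_subset: "x \<in> I \<Longrightarrow> x \<in> L"
  unfolding downset_def by auto

lemma downset_down_closed: "y \<in> L \<Longrightarrow> x \<in> I \<Longrightarrow> leq y x \<Longrightarrow> y \<in> I"
  unfolding downset_def using leq_trans by blast

lemma convex_between: "x \<in> C \<Longrightarrow> y \<in> C \<Longrightarrow> z \<in> L \<Longrightarrow> leq x z \<Longrightarrow> leq z y \<Longrightarrow> z \<in> C"
  using convex unfolding convex_in_def by blast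

lemma convex_up_in_downset: "x \<in> C \<Longrightarrow> z \<in> I \<Longrightarrow> leq x z \<Longrightarrow> z \<in> C"
  using convex_between downset_subset unfolding downset_def by blast

lemma heart_iff:
  "x \<in> heart C \<longleftrightarrow> x \<in> C \<and> (\<forall>w\<in>C. join L x w \<in> C \<and> meet L x w \<in> C)"
proof (intro iffI conjI ballI)
  assume x: "x \<in> heart C"
  then have xC: "x \<in> C" unfolding heart_def by blast
  then show "x \<in> C" .
  have finC: "finite C" using C_subset finite finite_subset by blast
  fix w assume w: "w \<in> C"
  have xL: "x \<in> L" and wL: "w \<in> L" using xC w C_subset by auto
  obtain t where t: "t \<in> C" "leq w t" "\<forall>u\<in>C. leq t u \<longrightarrow> u = t"
    using exists_maximal_above[OF finC w] .
  then have "leq (join L x w) t"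
    using x xL wL C_subset by (intro join_least) (auto simp: heart_def)
  then show "join L x w \<in> C"
    using convex_between[OF w t(1)] join_closed[OF xL wL] join_upper2[OF xL wL] by blast
  obtain b where b: "b \<in> C" "leq b w" "\<forall>u\<in>C. leq u b \<longrightarrow> u = b"
    using exists_minimal_below[OF finC w] .
  then have "leq b (meet L x w)"
    using x xL wL C_subset by (intro meet_greatest) (auto simp: heart_def)
  then show "meet L x w \<in> C"
    using convex_between[OF b(1) w] meet_closed[OF xL wL] meet_lower2[OF xL wL] by blast
next
  assume x: "x \<in> C \<and> (\<forall>w\<in>C. join L x w \<in> C \<and> meet L x w \<in> C)"
  then have xL: "x \<in> L" using C_subset by blast
  have "leq x t" if "t \<in> C" "\<forall>u\<in>C. leq t u \<longrightarrow> u = t" for t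
    using that x xL C_subset join_upper1[OF xL, of t] join_upper2[OF xL, of t] by force
  moreover have "leq b x" if "b \<in> C" "\<forall>u\<in>C. leq u b \<longrightarrow> u = b" for b
    using that x xL C_subset meet_lower1[OF xL, of b] meet_lower2[OF xL, of b] by force
  ultimately show "x \<in> heart C" using x unfolding heart_def by blast
qed

lemma heart_join_closed_below:
  assumes xh: "x \<in> heart C" and mL: "m \<in> L" and mx: "leq m x" and w: "w \<in> C"
  shows "join L m w \<in> C"
proof -
  have xL: "x \<in> L" and wL: "w \<in> L" using xh w C_subset unfolding heart_iff by auto
  have "leq (join L m w) (join L x w)"
    using mL wL xL mx join_upper1[OF xL wL] join_upper2[OF xL wL] leq_trans
    by (intro join_least join_closed) auto
  moreover have "join L x w \<in> C" using xh w unfolding heart_iff by blast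
  ultimately show ?thesis
    using convex_between[OF w] join_closed[OF mL wL] join_upper2[OF mL wL] by blast
qed

lemma heart_meet_closed_above:
  assumes xh: "x \<in> heart C" and mL: "m \<in> L" and xm: "leq x m" and w: "w \<in> C"
  shows "meet L m w \<in> C"
proof -
  have xL: "x \<in> L" and wL: "w \<in> L" using xh w C_subset unfolding heart_iff by auto
  have "leq (meet L x w) (meet L m w)"
    using mL wL xL xm meet_lower1[OF xL wL] meet_lower2[OF xL wL] leq_trans
    by (intro meet_greatest meet_closed) auto
  moreover have "meet L x w \<in> C" using xh w unfolding heart_iff by blast
  ultimately show ?thesis
    using convex_between[OF _ w] meet_closed[OF mL wL] meet_lower2[OF mL wL] by blast
qed

lemma mem_doubling_False [simp]: "x @ [False] \<in> D \<longleftrightarrow> x \<in> I"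
  unfolding doubling_def by auto

lemma mem_doubling_True [simp]: "x @ [True] \<in> D \<longleftrightarrow> x \<in> L \<and> (x \<notin> I \<or> x \<in> C)"
  unfolding doubling_def using C_subset by auto

lemma doubling_elem_cases:
  assumes "p \<in> D"
  obtains x b where "p = x @ [b]" "x \<in> L"
  using assms downset_subset C_subset unfolding doubling_def by auto

lemma doubling_snoc_memD: "x @ [b] \<in> D \<Longrightarrow> x \<in> L"
  using downset_subset by (cases b) auto

lemma is_lub_doubling:
  assumes "x @ [i] \<in> D" "y @ [j] \<in> D"
  shows "is_lub D (x @ [i]) (y @ [j]) (join L x y @ [i \<or> j \<or> join L x y \<notin> I])"
proof -
  have x: "x \<in> L" and y: "y \<in> L" using assms doubling_snoc_memD by auto
  let ?z = "join L x y" and ?k = "i \<or> j \<or> join L x y \<notin> I"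
  have z: "?z \<in> L" and xz: "leq x ?z" and yz: "leq y ?z"
    using join_closed[OF x y] join_upper1[OF x y] join_upper2[OF x y] .
  have "?z \<in> C" if "?z \<in> I" "i \<or> j"
  proof -
    have "x \<in> C \<or> y \<in> C"
      using assms that downset_down_closed[OF x _ xz] downset_down_closed[OF y _ yz] by auto
    then show ?thesis using convex_up_in_downset that(1) xz yz by blast
  qed
  then have "?z @ [?k] \<in> D" using z by (cases ?k) auto
  moreover have "leq (?z @ [?k]) u" if "u \<in> D" "leq (x @ [i]) u" "leq (y @ [j]) u" for u
  proof -
    obtain v l where v: "u = v @ [l]" "v \<in> L" using doubling_elem_cases[OF \<open>u \<in> D\<close>] .
    then have zv: "leq ?z v" using that join_least[OF x y] by simp
    have "?z \<notin> I \<Longrightarrow> l"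
      using that(1) v zv downset_down_closed[OF z] by (cases l) auto
    then show ?thesis using v zv that by auto
  qed
  ultimately show ?thesis using xz yz unfolding is_lub_def by simp
qed

lemma is_glb_doubling:
  assumes "x @ [i] \<in> D" "y @ [j] \<in> D"
  shows "is_glb D (x @ [i]) (y @ [j]) (meet L x y @ [i \<and> j \<and> (meet L x y \<in> I \<longrightarrow> meet L x y \<in> C)])"
proof -
  have x: "x \<in> L" and y: "y \<in> L" using assms doubling_snoc_memD by auto
  let ?z = "meet L x y" and ?k = "i \<and> j \<and> (meet L x y \<in> I \<longrightarrow> meet L x y \<in> C)"
  have z: "?z \<in> L" and zx: "leq ?z x" and zy: "leq ?z y"
    using meet_closed[OF x y] meet_lower1[OF x y] meet_lower2[OF x y] .
  have "?z \<in> I" if "\<not> (i \<and> j)"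
    using assms that downset_down_closed[OF z _ zx] downset_down_closed[OF z _ zy] by auto
  then have "?z @ [?k] \<in> D" using z by (cases ?k) auto
  moreover have "leq u (?z @ [?k])" if "u \<in> D" "leq u (x @ [i])" "leq u (y @ [j])" for u
  proof -
    obtain v l where v: "u = v @ [l]" "v \<in> L" using doubling_elem_cases[OF \<open>u \<in> D\<close>] .
    then have vz: "leq v ?z" using that meet_greatest[OF x y] by simp
    have "?z \<in> C" if "l" "?z \<in> I"
      using \<open>u \<in> D\<close> v that vz downset_down_closed convex_up_in_downset by auto
    then show ?thesis using v vz that by auto
  qed
  ultimately show ?thesis using zx zy unfolding is_glb_def by simp
qed

lemma join_doubling:
  "x @ [i] \<in> D \<Longrightarrow> y @ [j] \<in> D \<Longrightarrow>
    join D (x @ [i]) (y @ [j]) = join L x y @ [i \<or> j \<or> join L x y \<notin> I]"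
  using is_lub_doubling join_eqI by blast

lemma meet_doubling:
  "x @ [i] \<in> D \<Longrightarrow> y @ [j] \<in> D \<Longrightarrow>
    meet D (x @ [i]) (y @ [j]) = meet L x y @ [i \<and> j \<and> (meet L x y \<in> I \<longrightarrow> meet L x y \<in> C)]"
  using is_glb_doubling meet_eqI by blast

sublocale dbl: finite_lattice D
proof
  obtain c where "c \<in> C" using C_nonempty by blast
  then show "D \<noteq> {}" using C_subset_downset mem_doubling_False by blast
  have "D \<subseteq> (\<lambda>(x, b). x @ [b]) ` (L \<times> UNIV)"
    by (auto elim!: doubling_elem_cases simp: image_iff)
  then show "finite D" using finite by (meson finite_SigmaI finite_UNIV finite_imageI finite_subset)
next
  fix p q assume "p \<in> D" "q \<in> D"
  then show "\<exists>z. is_lub D p q z" "\<exists>z. is_glb D p q z"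
    by (metis doubling_elem_cases is_lub_doubling is_glb_doubling)+
qed

lemma butlast_join_doubling:
  "p \<in> D \<Longrightarrow> q \<in> D \<Longrightarrow> butlast (join D p q) = join L (butlast p) (butlast q)"
  by (metis doubling_elem_cases join_doubling butlast_snoc)

lemma butlast_meet_doubling:
  "p \<in> D \<Longrightarrow> q \<in> D \<Longrightarrow> butlast (meet D p q) = meet L (butlast p) (butlast q)"
  by (metis doubling_elem_cases meet_doubling butlast_snoc)

section \<open>Left modular elements of a doubling\<close>

lemma left_modular_elem_butlast:
  assumes lm: "left_modular_elem D (a @ [\<alpha>])"
  shows "left_modular_elem L a"
  unfolding left_modular_elem_def
proof (intro conjI ballI impI)
  have aD: "a @ [\<alpha>] \<in> D" using lm unfolding left_modular_elem_def by blast
  then show "a \<in> L" using doubling_snoc_memD by blast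
  fix b c assume b: "b \<in> L" and c: "c \<in> L" and bc: "lt b c"
  \<comment> \<open>the lowest copy of b and the highest copy of c\<close>
  define bb where "bb = b @ [b \<notin> I]"
  define cc where "cc = c @ [c \<notin> I \<or> c \<in> C]"
  have bbD: "bb \<in> D" using b by (cases "b \<in> I") (auto simp: bb_def)
  have ccD: "cc \<in> D" using c by (cases "c \<in> I"; cases "c \<in> C") (auto simp: cc_def)
  have "lt bb cc"
    using bc downset_down_closed[OF b] unfolding lt_def bb_def cc_def by auto
  then have "meet D (join D bb (a @ [\<alpha>])) cc = join D bb (meet D (a @ [\<alpha>]) cc)"
    using lm bbD ccD unfolding left_modular_elem_def by blast
  then show "meet L (join L b a) c = join L b (meet L a c)"
    using bbD ccD aD unfolding bb_def cc_def
    by (metis butlast_join_doubling butlast_meet_doubling butlast_snoc dbl.join_closed dbl.meet_closed)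
qed

lemma left_modular_doubling_defect:
  assumes lm: "left_modular_elem L a" and aD: "a @ [\<alpha>] \<in> D"
    and bbD: "bb \<in> D" and ccD: "cc \<in> D" and "lt bb cc"
    and ne: "meet D (join D bb (a @ [\<alpha>])) cc \<noteq> join D bb (meet D (a @ [\<alpha>]) cc)"
  obtains w where "w \<in> C" "meet D (join D bb (a @ [\<alpha>])) cc = w @ [True]"
    "join D bb (meet D (a @ [\<alpha>]) cc) = w @ [False]"
proof -
  let ?aa = "a @ [\<alpha>]"
  let ?lhs = "meet D (join D bb ?aa) cc" and ?rhs = "join D bb (meet D ?aa cc)"
  have lhsD: "?lhs \<in> D" and rhsD: "?rhs \<in> D"
    using aD bbD ccD by (simp_all add: dbl.join_closed dbl.meet_closed)
  obtain b \<beta> c \<gamma> where bb: "bb = b @ [\<beta>]" "b \<in> L" and cc: "cc = c @ [\<gamma>]" "c \<in> L"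
    using bbD ccD by (metis doubling_elem_cases)
  have "leq b c" using \<open>lt bb cc\<close> bb cc unfolding lt_def by simp
  then have "butlast ?lhs = butlast ?rhs"
    using left_modular_elemD[OF lm] aD bbD ccD bb cc
    by (simp add: butlast_join_doubling butlast_meet_doubling dbl.join_closed dbl.meet_closed)
  moreover have "leq ?rhs ?lhs"
    using dbl.join_meet_le_meet_join aD bbD ccD \<open>lt bb cc\<close> unfolding lt_def by blast
  ultimately obtain w where "?lhs = w @ [True]" "?rhs = w @ [False]"
    using lhsD rhsD ne by (elim doubling_elem_cases) (auto split: if_splits)
  moreover have "w \<in> C" using lhsD rhsD calculation by auto
  ultimately show ?thesis using that by blast
qed

lemma left_modular_doubling_False_join_closed:
  assumes lm: "left_modular_elem D (a @ [False])" and w: "w \<in> C"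
  shows "join L a w \<in> C"
proof -
  have aI: "a \<in> I" using lm unfolding left_modular_elem_def by simp
  have a: "a \<in> L" and wL: "w \<in> L" using aI w downset_subset C_subset by auto
  have wD: "w @ [False] \<in> D" "w @ [True] \<in> D" using w wL C_subset_downset by auto
  have "lt (w @ [False]) (w @ [True])" unfolding lt_def by simp
  then have eq: "meet D (join D (w @ [False]) (a @ [False])) (w @ [True])
      = join D (w @ [False]) (meet D (a @ [False]) (w @ [True]))"
    using lm wD unfolding left_modular_elem_def by blast
  have "meet D (a @ [False]) (w @ [True]) = meet L a w @ [False]"
    using aI wD by (simp add: meet_doubling)
  moreover have "meet L a w \<in> I"
    using downset_down_closed[OF meet_closed[OF a wL] _ meet_lower2[OF a wL]] w C_subset_downset by blast
  ultimately have "join D (w @ [False]) (meet D (a @ [False]) (w @ [True])) = w @ [False]"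
    using wD meet_lower2[OF a wL] dbl.join_absorb1 by simp
  moreover have "meet D (join D (w @ [False]) (a @ [False])) (w @ [True]) = w @ [True]"
    if "join L a w \<notin> I"
  proof -
    have "join D (w @ [False]) (a @ [False]) = join L a w @ [True]"
      using that aI wD by (simp add: join_doubling join_commute[of L w])
    moreover have "join L a w @ [True] \<in> D" using that join_closed[OF a wL] by simp
    ultimately show ?thesis
      using wD join_upper2[OF a wL] dbl.meet_absorb2 by simp
  qed
  ultimately have "join L a w \<in> I" using eq by fastforce
  then show ?thesis using convex_up_in_downset[OF w _ join_upper2[OF a wL]] by blast
qed

lemma left_modular_doubling_True_meet_closed:
  assumes lm: "left_modular_elem D (a @ [True])" and w: "w \<in> C"
  shows "meet L a w \<in> C"
proof (rule ccontr)
  assume nC: "meet L a w \<notin> C"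
  have aD: "a @ [True] \<in> D" using lm unfolding left_modular_elem_def by blast
  have a: "a \<in> L" and wL: "w \<in> L" using aD w C_subset by auto
  have wD: "w @ [False] \<in> D" "w @ [True] \<in> D" using w wL C_subset_downset by auto
  have "lt (w @ [False]) (w @ [True])" unfolding lt_def by simp
  then have eq: "meet D (join D (w @ [False]) (a @ [True])) (w @ [True])
      = join D (w @ [False]) (meet D (a @ [True]) (w @ [True]))"
    using lm aD wD unfolding left_modular_elem_def by blast
  have "join D (w @ [False]) (a @ [True]) = join L w a @ [True]"
    using aD wD by (simp add: join_doubling)
  moreover have "join L w a @ [True] \<in> D"
    using calculation aD wD dbl.join_closed by metis
  ultimately have "meet D (join D (w @ [False]) (a @ [True])) (w @ [True]) = w @ [True]"
    using wD join_upper1[OF wL a] dbl.meet_absorb2 by simp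
  moreover have mI: "meet L a w \<in> I"
    using downset_down_closed[OF meet_closed[OF a wL] _ meet_lower2[OF a wL]] wD by simp
  then have "meet D (a @ [True]) (w @ [True]) = meet L a w @ [False]"
    using aD wD nC by (simp add: meet_doubling)
  then have "join D (w @ [False]) (meet D (a @ [True]) (w @ [True])) = w @ [False]"
    using wD mI meet_lower2[OF a wL] dbl.join_absorb1 by simp
  ultimately show False using eq by simp
qed

lemma left_modular_elem_doubling_FalseI:
  assumes aI: "a \<in> I" and lm: "left_modular_elem L a"
    and closed: "\<And>w. w \<in> C \<Longrightarrow> join L a w \<in> C"
  shows "left_modular_elem D (a @ [False])"
  unfolding left_modular_elem_def
proof (intro conjI ballI impI)
  show aD: "a @ [False] \<in> D" using aI by simp
  have a: "a \<in> L" using aI downset_subset by blast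
  fix bb cc assume bbD: "bb \<in> D" and ccD: "cc \<in> D" and "lt bb cc"
  show "meet D (join D bb (a @ [False])) cc = join D bb (meet D (a @ [False]) cc)"
  proof (rule ccontr)
    assume "meet D (join D bb (a @ [False])) cc \<noteq> join D bb (meet D (a @ [False]) cc)"
    then obtain w where w: "w \<in> C" and lhs: "meet D (join D bb (a @ [False])) cc = w @ [True]"
      and rhs: "join D bb (meet D (a @ [False]) cc) = w @ [False]"
      using left_modular_doubling_defect[OF lm aD bbD ccD \<open>lt bb cc\<close>] by blast
    have wL: "w \<in> L" using w C_subset by blast
    let ?u = "join L a w"
    have uD: "?u @ [False] \<in> D" using closed[OF w] C_subset_downset by simp
    have "leq bb (w @ [False])"
      using rhs dbl.join_upper1 bbD aD ccD dbl.meet_closed by metis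
    then have "leq bb (?u @ [False])"
      using bbD join_upper2[OF a wL] leq_trans by (auto elim!: doubling_elem_cases)
    moreover have "leq (a @ [False]) (?u @ [False])" using join_upper1[OF a wL] by simp
    ultimately have "leq (join D bb (a @ [False])) (?u @ [False])"
      using dbl.join_least bbD aD uD by blast
    then have "leq (w @ [True]) (?u @ [False])"
      using lhs dbl.meet_lower1 leq_trans bbD aD ccD dbl.join_closed by metis
    then show False by simp
  qed
qed

lemma left_modular_elem_doubling_TrueI:
  assumes aD: "a @ [True] \<in> D" and lm: "left_modular_elem L a"
    and closed: "\<And>w. w \<in> C \<Longrightarrow> meet L a w \<in> C"
  shows "left_modular_elem D (a @ [True])"
  unfolding left_modular_elem_def
proof (intro conjI ballI impI)
  show "a @ [True] \<in> D" by (rule aD)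
  have a: "a \<in> L" using aD by simp
  fix bb cc assume bbD: "bb \<in> D" and ccD: "cc \<in> D" and "lt bb cc"
  show "meet D (join D bb (a @ [True])) cc = join D bb (meet D (a @ [True]) cc)"
  proof (rule ccontr)
    assume "meet D (join D bb (a @ [True])) cc \<noteq> join D bb (meet D (a @ [True]) cc)"
    then obtain w where w: "w \<in> C" and lhs: "meet D (join D bb (a @ [True])) cc = w @ [True]"
      and rhs: "join D bb (meet D (a @ [True]) cc) = w @ [False]"
      using left_modular_doubling_defect[OF lm aD bbD ccD \<open>lt bb cc\<close>] by blast
    have wL: "w \<in> L" using w C_subset by blast
    let ?u = "meet L a w"
    have uD: "?u @ [True] \<in> D" using closed[OF w] C_subset by auto
    have "leq (w @ [True]) cc"
      using lhs dbl.meet_lower2 bbD aD ccD dbl.join_closed by metis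
    then have "leq (?u @ [True]) cc"
      using ccD meet_lower2[OF a wL] leq_trans by (auto elim!: doubling_elem_cases)
    moreover have "leq (?u @ [True]) (a @ [True])" using meet_lower1[OF a wL] by simp
    ultimately have "leq (?u @ [True]) (meet D (a @ [True]) cc)"
      using dbl.meet_greatest ccD aD uD by blast
    then have "leq (?u @ [True]) (w @ [False])"
      using rhs dbl.join_upper2 leq_trans bbD aD ccD dbl.meet_closed by metis
    then show False by simp
  qed
qed

section \<open>Maximal chains of a doubling\<close>

lemma maximal_chain_split_chain:
  assumes mc: "maximal_chain L M" and xM: "x \<in> M" and xC: "x \<in> C"
  shows "maximal_chain D (split_chain M x)"
proof -
  have M_L: "M \<subseteq> L" and cmp: "\<And>u v. u \<in> M \<Longrightarrow> v \<in> M \<Longrightarrow> leq u v \<or> leq v u"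
    using mc unfolding maximal_chain_def is_chain_def by auto
  have "m @ [b] \<in> D" if "m @ [b] \<in> split_chain M x" for m b
  proof (cases b)
    case False
    then have "leq m x" "m \<in> L" using that M_L by auto
    then show ?thesis using False downset_down_closed C_subset_downset[OF xC] by simp
  next
    case True
    then have "leq x m" "m \<in> L" using that M_L by auto
    then show ?thesis using True convex_up_in_downset[OF xC] by auto
  qed
  moreover have "leq (m @ [b]) (n @ [c]) \<or> leq (n @ [c]) (m @ [b])"
    if "m @ [b] \<in> split_chain M x" "n @ [c] \<in> split_chain M x" for m b n c
  proof -
    have "leq m n \<or> leq n m" using that cmp by simp
    then show ?thesis
      using that leq_trans[of m x n] leq_trans[of n x m] by (cases b; cases c) auto
  qed
  ultimately have "is_chain D (split_chain M x)"
    unfolding is_chain_def by (metis split_chain_elem_cases subsetI)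
  moreover have "yy \<in> split_chain M x"
    if yyD: "yy \<in> D" and cmp_yy: "\<forall>p\<in>split_chain M x. leq p yy \<or> leq yy p" for yy
  proof -
    obtain y k where yy: "yy = y @ [k]" "y \<in> L" using doubling_elem_cases[OF yyD] .
    have "leq m y \<or> leq y m" if "m \<in> M" for m
    proof -
      have "m @ [False] \<in> split_chain M x \<or> m @ [True] \<in> split_chain M x"
        using cmp[OF that xM] that by simp
      then obtain b where "m @ [b] \<in> split_chain M x" by blast
      then have "leq (m @ [b]) yy \<or> leq yy (m @ [b])" using cmp_yy by blast
      then show ?thesis using yy(1) by auto
    qed
    then have yM: "y \<in> M" using maximal_chain_memI[OF mc \<open>y \<in> L\<close>] by blast
    have "x @ [\<not> k] \<in> split_chain M x" using xM by simp
    then have "leq (x @ [\<not> k]) (y @ [k]) \<or> leq (y @ [k]) (x @ [\<not> k])" using cmp_yy yy(1) by blast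
    then have "if k then leq x y else leq y x" by (cases k) auto
    then show ?thesis using yM yy(1) by simp
  qed
  ultimately show ?thesis by (rule maximal_chainI)
qed

lemma maximal_left_modular_chain_split_chain:
  assumes mlm: "maximal_left_modular_chain L M" and xM: "x \<in> M" and xh: "x \<in> heart C"
  shows "maximal_left_modular_chain D (split_chain M x)"
  unfolding maximal_left_modular_chain_def
proof (intro conjI ballI)
  have mc: "maximal_chain L M" and lmM: "\<And>a. a \<in> M \<Longrightarrow> left_modular_elem L a"
    using mlm unfolding maximal_left_modular_chain_def by auto
  have "x \<in> C" using xh unfolding heart_iff by blast
  then show mcD: "maximal_chain D (split_chain M x)" using maximal_chain_split_chain mc xM by blast
  fix p assume p: "p \<in> split_chain M x"
  then obtain m b where pm: "p = m @ [b]" "m \<in> M" by (rule split_chain_elem_cases)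
  have pD: "m @ [b] \<in> D" using p pm(1) mcD unfolding maximal_chain_def is_chain_def by blast
  have mL: "m \<in> L" using pm(2) mc unfolding maximal_chain_def is_chain_def by blast
  show "left_modular_elem D p"
  proof (cases b)
    case False
    then have "m \<in> I" "leq m x" using p pD pm by simp_all
    then have "left_modular_elem D (m @ [False])"
      using left_modular_elem_doubling_FalseI lmM[OF pm(2)] heart_join_closed_below[OF xh mL] by blast
    then show ?thesis using pm(1) False by simp
  next
    case True
    then have "m @ [True] \<in> D" "leq x m" using p pD pm by simp_all
    then have "left_modular_elem D (m @ [True])"
      using left_modular_elem_doubling_TrueI lmM[OF pm(2)] heart_meet_closed_above[OF xh mL] by blast
    then show ?thesis using pm(1) True by simp
  qed
qed

lemma maximal_chain_doubling_snocI:
  assumes mc: "maximal_chain D N" and yD: "y @ [k] \<in> D"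
    and between: "\<And>m i. m @ [i] \<in> N \<Longrightarrow> (leq m y \<and> i \<le> k) \<or> (leq y m \<and> k \<le> i)"
  shows "y @ [k] \<in> N"
proof (rule maximal_chain_memI[OF mc yD], rule ballI)
  fix p assume "p \<in> N"
  moreover have "N \<subseteq> D" using mc unfolding maximal_chain_def is_chain_def by blast
  ultimately obtain m i where "p = m @ [i]" by (blast elim: doubling_elem_cases)
  then show "leq p (y @ [k]) \<or> leq (y @ [k]) p" using between \<open>p \<in> N\<close> by auto
qed

lemma maximal_chain_doubling_copy_exists:
  assumes mc: "maximal_chain D N" and yL: "y \<in> L"
    and cy: "\<And>m i. m @ [i] \<in> N \<Longrightarrow> leq m y \<or> leq y m"
  shows "\<exists>k. y @ [k] \<in> N"
proof (rule ccontr)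
  assume "\<nexists>k. y @ [k] \<in> N"
  then have new: "\<And>k. y @ [k] \<notin> N" by blast
  have N_D: "N \<subseteq> D" and cmp: "\<And>p q. p \<in> N \<Longrightarrow> q \<in> N \<Longrightarrow> leq p q \<or> leq q p"
    using mc unfolding maximal_chain_def is_chain_def by auto
  have below: "\<exists>m. m @ [True] \<in> N \<and> \<not> leq y m" if "y \<in> I"
  proof (rule ccontr)
    assume none: "\<nexists>m. m @ [True] \<in> N \<and> \<not> leq y m"
    have "(leq m y \<and> i \<le> False) \<or> (leq y m \<and> False \<le> i)" if "m @ [i] \<in> N" for m i
      using that cy[OF that] none by (cases i) auto
    then have "y @ [False] \<in> N" using maximal_chain_doubling_snocI[OF mc] that by simp
    then show False using new by blast
  qed
  have above: "\<exists>n. n @ [False] \<in> N \<and> \<not> leq n y" if "y @ [True] \<in> D"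
  proof (rule ccontr)
    assume none: "\<nexists>n. n @ [False] \<in> N \<and> \<not> leq n y"
    have "(leq m y \<and> i \<le> True) \<or> (leq y m \<and> True \<le> i)" if "m @ [i] \<in> N" for m i
      using that cy[OF that] none by (cases i) auto
    then have "y @ [True] \<in> N" using maximal_chain_doubling_snocI[OF mc] that by simp
    then show False using new by blast
  qed
  have yI: "y \<in> I"
  proof (rule ccontr)
    assume "y \<notin> I"
    then obtain n where n: "n @ [False] \<in> N" "\<not> leq n y" using above yL by auto
    then have "leq y n" "n \<in> I" using cy N_D by auto
    then show False using \<open>y \<notin> I\<close> downset_down_closed[OF yL] by blast
  qed
  then obtain m where m: "m @ [True] \<in> N" "\<not> leq y m" using below by blast
  then have my: "leq m y" using cy by blast
  have "m @ [True] \<in> D" using m(1) N_D by blast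
  then have "m \<in> C" using downset_down_closed[OF _ yI my] by auto
  then have "y @ [True] \<in> D" using convex_up_in_downset[OF _ yI my] yL by simp
  then obtain n where n: "n @ [False] \<in> N" "\<not> leq n y" using above by blast
  have "leq (m @ [True]) (n @ [False]) \<or> leq (n @ [False]) (m @ [True])" using cmp m(1) n(1) .
  then show False using my n(2) leq_trans by auto
qed

lemma maximal_chain_butlast:
  assumes mc: "maximal_chain D N"
  shows "maximal_chain L (butlast ` N)"
proof (rule maximal_chainI)
  have N_cases: "\<And>p. p \<in> N \<Longrightarrow> \<exists>m i. p = m @ [i] \<and> m \<in> L"
    using mc unfolding maximal_chain_def is_chain_def by (blast elim: doubling_elem_cases)
  show "is_chain L (butlast ` N)"
    unfolding is_chain_def
  proof (intro conjI ballI subsetI)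
    fix u assume "u \<in> butlast ` N"
    then show "u \<in> L" using N_cases by force
  next
    fix u v assume "u \<in> butlast ` N" "v \<in> butlast ` N"
    then obtain i j where "u @ [i] \<in> N" "v @ [j] \<in> N" using N_cases by force
    then show "leq u v \<or> leq v u"
      using mc unfolding maximal_chain_def is_chain_def by force
  qed
  fix y assume yL: "y \<in> L" and "\<forall>m\<in>butlast ` N. leq m y \<or> leq y m"
  then have "\<And>m i. m @ [i] \<in> N \<Longrightarrow> leq m y \<or> leq y m" by (metis butlast_snoc image_eqI)
  then obtain k where "y @ [k] \<in> N" using maximal_chain_doubling_copy_exists[OF mc yL] by blast
  then show "y \<in> butlast ` N" by (metis butlast_snoc image_eqI)
qed

lemma maximal_chain_doubling_levels_nonempty:
  assumes mc: "maximal_chain D N"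
  shows "\<exists>a. a @ [False] \<in> N" and "\<exists>b. b @ [True] \<in> N"
proof -
  define M where "M = butlast ` N"
  have mcM: "maximal_chain L M" unfolding M_def by (rule maximal_chain_butlast[OF mc])
  then have M_L: "M \<subseteq> L" and cmp: "\<forall>x\<in>M. \<forall>y\<in>M. leq x y \<or> leq y x"
    unfolding maximal_chain_def is_chain_def by blast+
  have fin: "finite M" using M_L finite finite_subset by blast
  obtain u where "u \<in> L" using nonempty by blast
  then have ne: "M \<noteq> {}" using maximal_chain_nonempty[OF mcM] by blast
  obtain lo where lo: "lo \<in> M" "\<forall>m\<in>M. leq lo m"
    using finite_chain_has_least[OF fin ne cmp] .
  obtain hi where hi: "hi \<in> M" "\<forall>m\<in>M. leq m hi"
    using finite_chain_has_greatest[OF fin ne cmp] .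
  have in_M: "m \<in> M" if "m @ [i] \<in> N" for m i
    unfolding M_def using that by (metis butlast_snoc image_eqI)
  obtain w where w: "w \<in> C" using C_nonempty by blast
  have wL: "w \<in> L" using w C_subset by blast
  have loL: "lo \<in> L" and hiL: "hi \<in> L" using lo hi M_L by auto
  let ?y = "meet L lo w"
  have "?y @ [False] \<in> D"
    using downset_down_closed[OF meet_closed[OF loL wL] C_subset_downset[OF w] meet_lower2[OF loL wL]]
    by simp
  moreover have "leq ?y m" if "m @ [i] \<in> N" for m i
    using leq_trans[OF meet_lower1[OF loL wL]] lo(2) in_M[OF that] by blast
  ultimately have "?y @ [False] \<in> N" using maximal_chain_doubling_snocI[OF mc] by simp
  then show "\<exists>a. a @ [False] \<in> N" by blast
  let ?z = "join L hi w"
  have "?z \<in> I \<Longrightarrow> ?z \<in> C" using convex_up_in_downset[OF w _ join_upper2[OF hiL wL]] .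
  then have "?z @ [True] \<in> D" using join_closed[OF hiL wL] by simp
  moreover have "leq m ?z" if "m @ [i] \<in> N" for m i
    using leq_trans[OF _ join_upper1[OF hiL wL]] hi(2) in_M[OF that] by blast
  ultimately have "?z @ [True] \<in> N" using maximal_chain_doubling_snocI[OF mc] by simp
  then show "\<exists>b. b @ [True] \<in> N" by blast
qed

lemma maximal_chain_doubling_level_extrema:
  assumes mc: "maximal_chain D N"
  obtains a b where "a @ [False] \<in> N" "\<And>m. m @ [False] \<in> N \<Longrightarrow> leq m a"
    and "b @ [True] \<in> N" "\<And>m. m @ [True] \<in> N \<Longrightarrow> leq b m"
proof -
  have N_D: "N \<subseteq> D" and cmp: "\<And>p q. p \<in> N \<Longrightarrow> q \<in> N \<Longrightarrow> leq p q \<or> leq q p"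
    using mc unfolding maximal_chain_def is_chain_def by auto
  define A where "A = {m. m @ [False] \<in> N}"
  define B where "B = {m. m @ [True] \<in> N}"
  have "A \<subseteq> L" "B \<subseteq> L" using N_D doubling_snoc_memD unfolding A_def B_def by auto
  then have fin: "finite A" "finite B" using finite finite_subset by auto
  have ne: "A \<noteq> {}" "B \<noteq> {}"
    using maximal_chain_doubling_levels_nonempty[OF mc] unfolding A_def B_def by auto
  have cmpA: "\<forall>x\<in>A. \<forall>y\<in>A. leq x y \<or> leq y x"
    unfolding A_def using cmp by (metis leq_snoc mem_Collect_eq)
  obtain a where a: "a \<in> A" "\<forall>m\<in>A. leq m a"
    using finite_chain_has_greatest[OF fin(1) ne(1) cmpA] .
  have cmpB: "\<forall>x\<in>B. \<forall>y\<in>B. leq x y \<or> leq y x"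
    unfolding B_def using cmp by (metis leq_snoc mem_Collect_eq)
  obtain b where b: "b \<in> B" "\<forall>m\<in>B. leq b m"
    using finite_chain_has_least[OF fin(2) ne(2) cmpB] .
  show ?thesis using that a b unfolding A_def B_def by blast
qed

lemma heart_elem_in_maximal_left_modular_chain:
  assumes mlm: "maximal_left_modular_chain D N"
  obtains x where "x \<in> heart C" "x @ [False] \<in> N" "x @ [True] \<in> N"
proof -
  have mc: "maximal_chain D N" and lmN: "\<And>p. p \<in> N \<Longrightarrow> left_modular_elem D p"
    using mlm unfolding maximal_left_modular_chain_def by auto
  obtain a b where aN: "a @ [False] \<in> N" and a: "\<And>m. m @ [False] \<in> N \<Longrightarrow> leq m a"
    and bN: "b @ [True] \<in> N" and b: "\<And>m. m @ [True] \<in> N \<Longrightarrow> leq b m"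
    using maximal_chain_doubling_level_extrema[OF mc] by blast
  have aL: "a \<in> L" and bL: "b \<in> L"
    using aN bN mc doubling_snoc_memD unfolding maximal_chain_def is_chain_def by blast+
  have ab: "leq a b" using mc aN bN unfolding maximal_chain_def is_chain_def by force
  obtain w where w: "w \<in> C" using C_nonempty by blast
  have wL: "w \<in> L" using w C_subset by blast
  let ?y = "meet L b (join L a w)"
  have "join L a w \<in> C" using left_modular_doubling_False_join_closed[OF lmN[OF aN] w] .
  then have yC: "?y \<in> C" using left_modular_doubling_True_meet_closed[OF lmN[OF bN]] by blast
  have ay: "leq a ?y" using meet_greatest[OF bL join_closed[OF aL wL] aL ab join_upper1[OF aL wL]] .
  have yb: "leq ?y b" using meet_lower1[OF bL join_closed[OF aL wL]] .
  have sep: "(leq m ?y \<and> \<not> i) \<or> (leq ?y m \<and> i)" if "m @ [i] \<in> N" for m i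
    using that a b leq_trans[OF _ ay] leq_trans[OF yb] by (cases i) auto
  have yD: "?y @ [False] \<in> D" "?y @ [True] \<in> D" using yC C_subset C_subset_downset by auto
  have yN: "?y @ [False] \<in> N" "?y @ [True] \<in> N"
    using maximal_chain_doubling_snocI[OF mc yD(1)] maximal_chain_doubling_snocI[OF mc yD(2)] sep
    by auto
  have "?y \<in> heart C"
    unfolding heart_iff
    using yC left_modular_doubling_False_join_closed[OF lmN[OF yN(1)]]
      left_modular_doubling_True_meet_closed[OF lmN[OF yN(2)]] by blast
  then show ?thesis using that yN by blast
qed

lemma left_modular_lattice_doubling_iff:
  "left_modular_lattice D \<longleftrightarrow> (\<exists>x\<in>heart C. \<exists>M. maximal_left_modular_chain L M \<and> x \<in> M)"
proof
  assume "left_modular_lattice D"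
  then obtain N where N: "maximal_left_modular_chain D N" unfolding left_modular_lattice_def by blast
  then have mc: "maximal_chain D N" and lmN: "\<And>p. p \<in> N \<Longrightarrow> left_modular_elem D p"
    unfolding maximal_left_modular_chain_def by auto
  obtain x where x: "x \<in> heart C" "x @ [False] \<in> N"
    using heart_elem_in_maximal_left_modular_chain[OF N] by blast
  have "left_modular_elem L m" if m: "m \<in> butlast ` N" for m
  proof -
    obtain p where p: "p \<in> N" "m = butlast p" using m by blast
    then have "p \<in> D" using mc unfolding maximal_chain_def is_chain_def by blast
    then obtain i where "p = m @ [i]" using p(2) by (metis butlast_snoc doubling_elem_cases)
    then show ?thesis using left_modular_elem_butlast lmN[OF p(1)] by blast
  qed
  then have "maximal_left_modular_chain L (butlast ` N)"
    using maximal_chain_butlast[OF mc] unfolding maximal_left_modular_chain_def by blast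
  moreover have "x \<in> butlast ` N" using x(2) by (metis butlast_snoc image_eqI)
  ultimately show "\<exists>x\<in>heart C. \<exists>M. maximal_left_modular_chain L M \<and> x \<in> M"
    using x(1) by blast
next
  assume "\<exists>x\<in>heart C. \<exists>M. maximal_left_modular_chain L M \<and> x \<in> M"
  then show "left_modular_lattice D"
    using maximal_left_modular_chain_split_chain unfolding left_modular_lattice_def by blast
qed

end

section \<open>Iterated doublings\<close>

lemma E_take_Suc: "k < length Cs \<Longrightarrow> E (take (Suc k) Cs) = doubling (E (take k Cs)) (Cs ! k)"
  unfolding E_def by (simp add: take_Suc_conv_app_nth)

lemma E_Nil [simp]: "E [] = {[]}"
  unfolding E_def by simp

lemma finite_lattice_singleton: "finite_lattice {[]}"
  by unfold_locales (auto simp: is_lub_def is_glb_def)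

lemma left_modular_lattice_singleton: "left_modular_lattice {[]}"
proof -
  have "maximal_chain {[]} {[]}" unfolding maximal_chain_def is_chain_def by auto
  moreover have "left_modular_elem {[]} []" unfolding left_modular_elem_def lt_def by auto
  ultimately show ?thesis
    unfolding left_modular_lattice_def maximal_left_modular_chain_def by blast
qed

lemma convex_doubling_E_take:
  assumes seq: "doubling_seq Cs" and k: "k < length Cs" and lat: "finite_lattice (E (take k Cs))"
  shows "convex_doubling (E (take k Cs)) (Cs ! k)"
  using seq k lat unfolding doubling_seq_def
  by (simp add: convex_doubling_def convex_doubling_axioms_def)

lemma finite_lattice_E_take:
  assumes seq: "doubling_seq Cs"
  shows "k \<le> length Cs \<Longrightarrow> finite_lattice (E (take k Cs))"
proof (induction k)
  case 0
  then show ?case using finite_lattice_singleton by simp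
next
  case (Suc k)
  then have k: "k < length Cs" by simp
  then interpret convex_doubling "E (take k Cs)" "Cs ! k"
    using convex_doubling_E_take[OF seq] Suc by simp
  show ?case using dbl.finite_lattice_axioms E_take_Suc[OF k] by simp
qed

lemma left_modular_lattice_E_take_iff:
  assumes seq: "doubling_seq Cs"
  shows "k \<le> length Cs \<Longrightarrow> left_modular_lattice (E (take k Cs)) \<longleftrightarrow>
    (\<forall>i<k. \<exists>x\<in>heart (Cs ! i). \<exists>M. maximal_left_modular_chain (E (take i Cs)) M \<and> x \<in> M)"
proof (induction k)
  case 0
  then show ?case using left_modular_lattice_singleton by simp
next
  case (Suc k)
  then have k: "k < length Cs" by simp
  have "left_modular_lattice (E (take (Suc k) Cs)) \<longleftrightarrow>
      (\<exists>x\<in>heart (Cs ! k). \<exists>M. maximal_left_modular_chain (E (take k Cs)) M \<and> x \<in> M)"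
    using convex_doubling.left_modular_lattice_doubling_iff[OF
        convex_doubling_E_take[OF seq k finite_lattice_E_take[OF seq]]] E_take_Suc[OF k] k by simp
  then show ?case
    using Suc unfolding left_modular_lattice_def by (auto simp: less_Suc_eq)
qed

theorem theorem3p12:
  fixes Cs :: "bool list set list"
  assumes "doubling_seq Cs"
  shows "left_modular_lattice (E Cs) \<longleftrightarrow>
    (\<forall>i<length Cs. \<exists>x\<in>heart (Cs ! i).
       \<exists>M. maximal_left_modular_chain (E (take i Cs)) M \<and> x \<in> M)"
  using left_modular_lattice_E_take_iff[OF assms order_refl] by simp

end
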